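(* Let $G$ be a finite saturable graph with diameter at most $2$. Then $G$ is supersaturable.
   Context: For a simple graph $G$ and a positive integer $k$, a proper $k$-total difference labeling (TDL) of $G$ is a function $f: V(G)\to\{1,\dots,k\}$, extended to edges by $f(\{u,v\}) = |f(u)-f(v)|$, such that: (i) adjacent vertices receive different labels; (ii) two distinct edges sharing a vertex receive different labels; (iii) no edge receives the same label as either of its endpoints. $\chi_{td}(G)$ denotes the smallest $k$ for which such a labeling exists. A TDL of a graph $G$ of order $n$ is saturated if $\chi_{td}(G)=n$ and the set of vertex labels used is exactly $\{1,2,\dots,\chi_{td}(G)\}$. $G$ is saturable if it has at least one saturated labeling, and supersaturable if every proper $\chi_{td}(G)$-total difference labeling of $G$ is saturated. *)

theory Defs
  imports Main
begin

definition simple_graph :: "'a set \<Rightarrow> ('a \<Rightarrow> 'a \<Rightarrow> bool) \<Rightarrow> bool" where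
  "simple_graph V E \<longleftrightarrow> finite V \<and> (\<forall>u v. E u v \<longrightarrow> u \<in> V \<and> v \<in> V)
     \<and> (\<forall>u v. E u v \<longrightarrow> E v u) \<and> (\<forall>v. \<not> E v v)"

definition diam_le_2 :: "'a set \<Rightarrow> ('a \<Rightarrow> 'a \<Rightarrow> bool) \<Rightarrow> bool" where
  "diam_le_2 V E \<longleftrightarrow> (\<forall>u\<in>V. \<forall>v\<in>V. u \<noteq> v \<longrightarrow> E u v \<or> (\<exists>w. E u w \<and> E w v))"

text \<open>Proper k-total difference labeling; edge label of {u,v} is |f u - f v|.\<close>
definition proper_tdl :: "'a set \<Rightarrow> ('a \<Rightarrow> 'a \<Rightarrow> bool) \<Rightarrow> nat \<Rightarrow> ('a \<Rightarrow> int) \<Rightarrow> bool" where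
  "proper_tdl V E k f \<longleftrightarrow>
     (\<forall>v\<in>V. f v \<in> {1..int k})
   \<and> (\<forall>u v. E u v \<longrightarrow> f u \<noteq> f v)
   \<and> (\<forall>u v w. E u v \<and> E u w \<and> v \<noteq> w \<longrightarrow> \<bar>f u - f v\<bar> \<noteq> \<bar>f u - f w\<bar>)
   \<and> (\<forall>u v. E u v \<longrightarrow> \<bar>f u - f v\<bar> \<noteq> f u \<and> \<bar>f u - f v\<bar> \<noteq> f v)"

definition chi_td :: "'a set \<Rightarrow> ('a \<Rightarrow> 'a \<Rightarrow> bool) \<Rightarrow> nat" where
  "chi_td V E = (LEAST k. 0 < k \<and> (\<exists>f. proper_tdl V E k f))"

definition saturated_tdl :: "'a set \<Rightarrow> ('a \<Rightarrow> 'a \<Rightarrow> bool) \<Rightarrow> ('a \<Rightarrow> int) \<Rightarrow> bool" where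
  "saturated_tdl V E f \<longleftrightarrow> proper_tdl V E (chi_td V E) f \<and> chi_td V E = card V
     \<and> f ` V = {1..int (chi_td V E)}"

definition saturable :: "'a set \<Rightarrow> ('a \<Rightarrow> 'a \<Rightarrow> bool) \<Rightarrow> bool" where
  "saturable V E \<longleftrightarrow> (\<exists>f. saturated_tdl V E f)"

definition supersaturable :: "'a set \<Rightarrow> ('a \<Rightarrow> 'a \<Rightarrow> bool) \<Rightarrow> bool" where
  "supersaturable V E \<longleftrightarrow> (\<forall>f. proper_tdl V E (chi_td V E) f \<longrightarrow> saturated_tdl V E f)"

end

theory Submission
  imports Defs
begin

text \<open>In a graph of diameter at most 2 any two distinct vertices are adjacent or share a
  neighbour, and a proper total difference labeling separates both kinds of pairs: adjacent
  vertices by condition (i), and the ends of two edges at a common vertex w by condition (ii),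
  since the edge labels are the distances to f w. So every proper labeling is injective on V.
  Saturability gives chi_td V E = |V|, hence an injective labeling of V into
  {1..|V|} uses every label.\<close>

lemma proper_tdl_adjacent_labels_differ:
  assumes "proper_tdl V E k f" and "E u v"
  shows "f u \<noteq> f v"
  using assms unfolding proper_tdl_def by blast

lemma proper_tdl_labels_differ_at_common_neighbour:
  assumes "proper_tdl V E k f" and "E w u" and "E w v" and "u \<noteq> v"
  shows "f u \<noteq> f v"
proof
  assume "f u = f v"
  then have "\<bar>f w - f u\<bar> = \<bar>f w - f v\<bar>" by simp
  with assms show False unfolding proper_tdl_def by blast
qed

lemma proper_tdl_inj_on_if_diam_le_2:
  assumes "simple_graph V E" and "diam_le_2 V E" and "proper_tdl V E k f"
  shows "inj_on f V"
proof (rule inj_onI, rule ccontr)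
  fix u v assume "u \<in> V" "v \<in> V" "f u = f v" "u \<noteq> v"
  with assms(2) have "E u v \<or> (\<exists>w. E u w \<and> E w v)"
    unfolding diam_le_2_def by blast
  then consider "E u v" | w where "E u w" "E w v" by blast
  then show False
  proof cases
    case 1
    from proper_tdl_adjacent_labels_differ[OF assms(3) this] \<open>f u = f v\<close>
    show False by simp
  next
    case (2 w)
    with assms(1) have "E w u" unfolding simple_graph_def by blast
    from proper_tdl_labels_differ_at_common_neighbour[OF assms(3) this \<open>E w v\<close> \<open>u \<noteq> v\<close>]
      \<open>f u = f v\<close>
    show False by simp
  qed
qed

lemma saturable_imp_chi_td_eq_card:
  assumes "saturable V E"
  shows "chi_td V E = card V"
  using assms unfolding saturable_def saturated_tdl_def by blast

lemma image_eq_atLeastAtMost_if_inj_on: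
  fixes f :: "'a \<Rightarrow> int"
  assumes "inj_on f V" and "f ` V \<subseteq> {1..int n}" and "card V = n"
  shows "f ` V = {1..int n}"
proof (rule card_subset_eq)
  show "card (f ` V) = card {1..int n}"
    using assms(1,3) by (simp add: card_image)
qed (use assms(2) in auto)

theorem mainTheorem12:
  fixes V :: "'a set" and E :: "'a \<Rightarrow> 'a \<Rightarrow> bool"
  assumes "simple_graph V E"
    and "saturable V E"
    and "diam_le_2 V E"
  shows "supersaturable V E"
  unfolding supersaturable_def
proof (intro allI impI)
  fix f assume f: "proper_tdl V E (chi_td V E) f"
  have chi: "chi_td V E = card V"
    using assms(2) by (rule saturable_imp_chi_td_eq_card)
  have "inj_on f V"
    using assms(1,3) f by (rule proper_tdl_inj_on_if_diam_le_2)
  moreover have "f ` V \<subseteq> {1..int (chi_td V E)}"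
    using f by (auto simp: proper_tdl_def)
  ultimately have "f ` V = {1..int (chi_td V E)}"
    using chi by (intro image_eq_atLeastAtMost_if_inj_on) simp_all
  with f chi show "saturated_tdl V E f" by (simp add: saturated_tdl_def)
qed

end
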